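(* Let $\mathcal{P}$ be a fixed hyper-prior, $\delta>0$, and $\lambda_1,\dots,\lambda_n>0$ fixed. Then with probability at least $1-\delta$ over the sampling of $S_1,\dots,S_n$, simultaneously for all hyper-posteriors $\mathcal{Q}$ and all posteriors $Q_1,\dots,Q_n$, $$-\sum_{i=1}^n m_i\log\Big(1-\mathcal{R}_i(Q_i)+\mathcal{R}_i(Q_i)\,e^{-\frac{\lambda_i}{n m_i}}\Big)\;\le\;\frac1n\sum_{i=1}^n\lambda_i\,\widehat{\mathcal{R}}_i(Q_i)+\mathrm{KL}(\mathfrak{Q}\|\mathfrak{P})+\log\frac1\delta.$$
   Context: Multi-task setting: $n$ tasks; task $i$ has an unknown distribution $D_i$ on $\mathcal{Z}$, a loss $\ell_i:\mathcal{F}\times\mathcal{Z}\to[0,1]$, and a training set $S_i=(z_{i1},\dots,z_{im_i})$ of $m_i\ge1$ i.i.d. samples from $D_i$, the $S_i$ mutually independent. $\mathcal{M}(\mathcal{F})$ is the set of probability distributions on $\mathcal{F}$. For $Q\in\mathcal{M}(\mathcal{F})$: $\ell_i(Q,z)=\mathbb{E}_{f\sim Q}\ell_i(f,z)$, $\mathcal{R}_i(Q)=\mathbb{E}_{z\sim D_i}\ell_i(Q,z)$, $\widehat{\mathcal{R}}_i(Q)=\frac1{m_i}\sum_{j=1}^{m_i}\ell_i(Q,z_{ij})$. Hyper-prior $\mathcal{P}$ (data-independent) and hyper-posterior $\mathcal{Q}$ are distributions on $\mathcal{M}(\mathcal{F})$; posteriors $Q_i\in\mathcal{M}(\mathcal{F})$;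 $\mathcal{Q},Q_i$ may depend on the data. $\mathfrak{Q}=\mathcal{Q}\times Q_1\times\cdots\times Q_n$ on $\mathcal{M}(\mathcal{F})\times\mathcal{F}^n$; $\mathfrak{P}$ on the same space is generated by $P\sim\mathcal{P}$, then $f_1,\dots,f_n$ i.i.d. $\sim P$. $\mathrm{KL}$ is the Kullback–Leibler divergence. *)

theory Defs
  imports "HOL-Probability.Probability"
begin

text \<open>Kullback--Leibler divergence KL(Q || P) with natural logarithm, valued in the
extended reals: it is +infinity unless Q is absolutely continuous w.r.t. P and the
log-density is Q-integrable (if Q << P the negative part of the log-density is always
Q-integrable, so non-integrability means the divergence is +infinity).
Note: the library's KL_divergence b M N denotes KL(N || M).\<close>
definition KL :: "'a measure \<Rightarrow> 'a measure \<Rightarrow> ereal" where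
  "KL Q P = (if sets Q = sets P \<and> absolutely_continuous P Q
                \<and> integrable Q (entropy_density (exp 1) P Q)
             then ereal (KL_divergence (exp 1) P Q) else \<infinity>)"

definition rloss :: "('f \<Rightarrow> 'z \<Rightarrow> real) \<Rightarrow> 'f measure \<Rightarrow> 'z \<Rightarrow> real" where
  "rloss l Q z = (\<integral>f. l f z \<partial>Q)"

definition risk :: "('f \<Rightarrow> 'z \<Rightarrow> real) \<Rightarrow> 'z measure \<Rightarrow> 'f measure \<Rightarrow> real" where
  "risk l D Q = (\<integral>z. rloss l Q z \<partial>D)"

definition emp_risk :: "('f \<Rightarrow> 'z \<Rightarrow> real) \<Rightarrow> nat \<Rightarrow> (nat \<Rightarrow> 'z) \<Rightarrow> 'f measure \<Rightarrow> real" where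
  "emp_risk l m s Q = (1 / real m) * (\<Sum>j<m. rloss l Q (s j))"

definition joint_post :: "nat \<Rightarrow> 'f measure measure \<Rightarrow> (nat \<Rightarrow> 'f measure) \<Rightarrow> 'f measure
     \<Rightarrow> ('f measure \<times> (nat \<Rightarrow> 'f)) measure" where
  "joint_post n HQ Qs F = HQ \<Otimes>\<^sub>M (\<Pi>\<^sub>M i\<in>{..<n}. Qs i)"

definition joint_prior :: "nat \<Rightarrow> 'f measure measure \<Rightarrow> 'f measure
     \<Rightarrow> ('f measure \<times> (nat \<Rightarrow> 'f)) measure" where
  "joint_prior n HP F = HP \<bind> (\<lambda>p. return (prob_algebra F) p \<Otimes>\<^sub>M (\<Pi>\<^sub>M i\<in>{..<n}. p))"

end

theory Submission
  imports Defs
begin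

text \<open>
  Let \<open>c\<^sub>i = \<lambda>\<^sub>i / (n m\<^sub>i)\<close> and \<open>\<Phi>\<^sub>c(r) = - ln (1 - r + r exp (- c))\<close> (Catoni's function), so
  the left-hand side is \<open>\<Sum>\<^sub>i m\<^sub>i \<Phi>\<^sub>c\<^sub>i(R\<^sub>i(Q\<^sub>i))\<close>. For fixed predictors \<open>f = (f\<^sub>1, ..., f\<^sub>n)\<close> the
  exponent \<open>E(f, S) = \<Sum>\<^sub>i (m\<^sub>i \<Phi>\<^sub>c\<^sub>i(R\<^sub>i(f\<^sub>i)) - c\<^sub>i \<Sum>\<^sub>j l\<^sub>i(f\<^sub>i, z\<^sub>i\<^sub>j))\<close> satisfies
  \<open>E\<^sub>S exp E(f, S) \<le> 1\<close>: the samples are independent, and by convexity of \<open>exp\<close> a loss in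
  \<open>[0, 1]\<close> with mean \<open>R\<close> has \<open>E exp (- c l) \<le> 1 - R + R exp (- c) = exp (- \<Phi>\<^sub>c(R))\<close>.
  By Fubini the bound survives averaging \<open>f\<close> over the joint prior \<open>\<P>\<close>, so by Markov's
  inequality \<open>E\<^sub>\<P> exp E(\<cdot>, S) \<le> 1 / \<delta>\<close> outside an event of probability \<open>\<delta>\<close>. For such \<open>S\<close>
  the Donsker--Varadhan change of measure \<open>E\<^sub>\<Q> E \<le> KL(\<Q> || \<P>) + ln E\<^sub>\<P> exp E\<close> holds for all
  hyper-posteriors and posteriors at once, and as \<open>\<Phi>\<^sub>c\<close> is convex, Jensen's inequality moves
  the expectation over \<open>Q\<^sub>i\<close> inside \<open>\<Phi>\<^sub>c\<^sub>i\<close>.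
\<close>

section \<open>Measurability of the joint prior and marginals of product measures\<close>

lemma measurable_emeasure_prob_algebra:
  assumes "X \<in> sets F"
  shows "(\<lambda>p. emeasure p X) \<in> borel_measurable (prob_algebra F)"
  unfolding prob_algebra_def
  by (intro measurable_restrict_space1 measurable_emeasure_subprob_algebra assms)

lemma measurable_PiM_iid_prob_algebra:
  assumes I: "finite I"
  shows "(\<lambda>p. PiM I (\<lambda>_. p)) \<in> prob_algebra F \<rightarrow>\<^sub>M prob_algebra (PiM I (\<lambda>_. F))"
proof (rule measurable_prob_algebra_generated[OF sets_PiM Int_stable_prod_algebra prod_algebra_sets_into_space])
  fix p assume "p \<in> space (prob_algebra F)"
  then have p: "sets p = sets F" "prob_space p" by (auto simp: space_prob_algebra)
  then show "prob_space (PiM I (\<lambda>_. p))" "sets (PiM I (\<lambda>_. p)) = sets (PiM I (\<lambda>_. F))"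
    by (auto intro!: prob_space_PiM sets_PiM_cong)
next
  fix A assume "A \<in> prod_algebra I (\<lambda>_. F)"
  then obtain X where A: "A = PiE I X" "X \<in> (\<Pi> j\<in>I. sets F)"
    unfolding prod_algebra_eq_finite[OF I] by auto
  have "(\<lambda>p. \<Prod>i\<in>I. emeasure p (X i)) \<in> borel_measurable (prob_algebra F)"
    using A by (intro borel_measurable_prod_ennreal measurable_emeasure_prob_algebra) auto
  moreover have "emeasure (PiM I (\<lambda>_. p)) A = (\<Prod>i\<in>I. emeasure p (X i))"
    if "p \<in> space (prob_algebra F)" for p
  proof -
    from that have p: "sets p = sets F" "prob_space p" by (auto simp: space_prob_algebra)
    interpret product_sigma_finite "\<lambda>_. p"
      using prob_space_imp_sigma_finite[OF p(2)] by (simp add: product_sigma_finite_def)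
    show ?thesis
      using A p by (simp add: emeasure_PiM[OF I] Pi_iff)
  qed
  ultimately show "(\<lambda>p. emeasure (PiM I (\<lambda>_. p)) A) \<in> borel_measurable (prob_algebra F)"
    by (simp cong: measurable_cong)
qed

lemma measurable_joint_prior_kernel:
  "(\<lambda>p. return (prob_algebra F) p \<Otimes>\<^sub>M (\<Pi>\<^sub>M i\<in>{..<n}. p)) \<in>
     prob_algebra F \<rightarrow>\<^sub>M prob_algebra (prob_algebra F \<Otimes>\<^sub>M PiM {..<n::nat} (\<lambda>_. F))"
  by (intro measurable_pair_prob measurable_return_prob_space measurable_PiM_iid_prob_algebra finite_lessThan)

lemma prob_space_joint_prior:
  "HP \<in> space (prob_algebra (prob_algebra F)) \<Longrightarrow> prob_space (joint_prior n HP F)"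
  unfolding joint_prior_def by (rule prob_space_bind'[OF _ measurable_joint_prior_kernel])

lemma sets_joint_prior:
  "HP \<in> space (prob_algebra (prob_algebra F)) \<Longrightarrow>
     sets (joint_prior n HP F) = sets (prob_algebra F \<Otimes>\<^sub>M PiM {..<n} (\<lambda>_. F))"
  unfolding joint_prior_def by (rule sets_bind'[OF _ measurable_joint_prior_kernel])

lemma prob_space_joint_post:
  assumes "HQ \<in> space (prob_algebra (prob_algebra F))" and "\<forall>i<n. Qs i \<in> space (prob_algebra F)"
  shows "prob_space (joint_post n HQ Qs F)"
  using assms unfolding joint_post_def by (auto simp: space_prob_algebra intro!: prob_space_pair prob_space_PiM)

lemma distr_pair_snd:
  assumes "prob_space N" and "sigma_finite_measure M"
  shows "distr (N \<Otimes>\<^sub>M M) M snd = M"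
proof (rule measure_eqI)
  interpret N: prob_space N by fact
  interpret M: sigma_finite_measure M by fact
  fix A assume "A \<in> sets (distr (N \<Otimes>\<^sub>M M) M snd)"
  then have A: "A \<in> sets M" by simp
  then have "snd -` A \<inter> space (N \<Otimes>\<^sub>M M) = space N \<times> A"
    by (auto simp: space_pair_measure dest: sets.sets_into_space)
  with A show "emeasure (distr (N \<Otimes>\<^sub>M M) M snd) A = emeasure M A"
    by (simp add: emeasure_distr M.emeasure_pair_measure_Times N.emeasure_space_1)
qed simp

lemma distr_pair_PiM_component:
  assumes N: "prob_space N" and M: "\<And>i. i \<in> I \<Longrightarrow> prob_space (M i)" and i: "i \<in> I"
  shows "distr (N \<Otimes>\<^sub>M PiM I M) (M i) (\<lambda>\<omega>. snd \<omega> i) = M i"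
proof -
  have "distr (N \<Otimes>\<^sub>M PiM I M) (M i) (\<lambda>\<omega>. snd \<omega> i)
      = distr (distr (N \<Otimes>\<^sub>M PiM I M) (PiM I M) snd) (M i) (\<lambda>x. x i)"
    using i by (simp add: distr_distr comp_def)
  also have "\<dots> = distr (PiM I M) (M i) (\<lambda>x. x i)"
    using M by (simp add: distr_pair_snd[OF N] prob_space_imp_sigma_finite prob_space_PiM)
  also have "\<dots> = M i"
    using M i by (rule distr_PiM_component)
  finally show ?thesis .
qed

lemma
  fixes g :: "'a \<Rightarrow> 'b::{banach, second_countable_topology}"
  assumes N: "prob_space N" and M: "\<And>i. i \<in> I \<Longrightarrow> prob_space (M i)" and i: "i \<in> I"
    and g: "g \<in> borel_measurable (M i)"
  shows integrable_pair_PiM_component: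
      "integrable (N \<Otimes>\<^sub>M PiM I M) (\<lambda>\<omega>. g (snd \<omega> i)) \<longleftrightarrow> integrable (M i) g"
    and integral_pair_PiM_component:
      "(\<integral>\<omega>. g (snd \<omega> i) \<partial>(N \<Otimes>\<^sub>M PiM I M)) = (\<integral>x. g x \<partial>M i)"
proof -
  have proj: "(\<lambda>\<omega>. snd \<omega> i) \<in> N \<Otimes>\<^sub>M PiM I M \<rightarrow>\<^sub>M M i"
    using i by (intro measurable_compose[OF measurable_snd measurable_component_singleton])
  have marginal: "distr (N \<Otimes>\<^sub>M PiM I M) (M i) (\<lambda>\<omega>. snd \<omega> i) = M i"
    using N M i by (rule distr_pair_PiM_component)
  show "integrable (N \<Otimes>\<^sub>M PiM I M) (\<lambda>\<omega>. g (snd \<omega> i)) \<longleftrightarrow> integrable (M i) g"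
    using integrable_distr_eq[OF proj g] unfolding marginal by simp
  show "(\<integral>\<omega>. g (snd \<omega> i) \<partial>(N \<Otimes>\<^sub>M PiM I M)) = (\<integral>x. g x \<partial>M i)"
    using integral_distr[OF proj g] unfolding marginal by simp
qed

section \<open>Change of measure\<close>

lemma AE_RN_deriv_pos:
  assumes "sigma_finite_measure P" and "sigma_finite_measure Q"
    and ac: "absolutely_continuous P Q" and sets: "sets Q = sets P"
  shows "AE x in Q. 0 < enn2real (RN_deriv P Q x)"
proof -
  interpret P: sigma_finite_measure P by fact
  have "AE x in Q. RN_deriv P Q x \<noteq> \<infinity>"
    using P.RN_deriv_finite[OF assms(2) ac sets] by (rule absolutely_continuous_AE[OF sets ac])
  moreover have "AE x in Q. 0 < RN_deriv P Q x"
    by (subst P.density_RN_deriv[OF ac sets, symmetric]) (auto simp: AE_density)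
  ultimately show ?thesis
    by eventually_elim (auto simp: enn2real_positive_iff less_top)
qed

lemma nn_integral_div_RN_deriv_le:
  assumes "sigma_finite_measure P" and ac: "absolutely_continuous P Q" and sets: "sets Q = sets P"
    and g: "g \<in> borel_measurable P" "\<And>x. 0 \<le> g x"
  shows "(\<integral>\<^sup>+x. ennreal (g x / enn2real (RN_deriv P Q x)) \<partial>Q) \<le> (\<integral>\<^sup>+x. ennreal (g x) \<partial>P)"
proof -
  interpret P: sigma_finite_measure P by fact
  have "(\<integral>\<^sup>+x. ennreal (g x / enn2real (RN_deriv P Q x)) \<partial>Q)
      = (\<integral>\<^sup>+x. RN_deriv P Q x * ennreal (g x / enn2real (RN_deriv P Q x)) \<partial>P)"
    using g by (subst P.density_RN_deriv[OF ac sets, symmetric]) (simp add: nn_integral_density)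
  also have "\<dots> \<le> (\<integral>\<^sup>+x. ennreal (g x) \<partial>P)"
  proof (rule nn_integral_mono)
    fix x
    show "RN_deriv P Q x * ennreal (g x / enn2real (RN_deriv P Q x)) \<le> ennreal (g x)"
      using g(2)[of x] by (cases "RN_deriv P Q x" rule: ennreal_cases)
        (auto simp: ennreal_mult[symmetric] simp del: ennreal_mult')
  qed
  finally show ?thesis .
qed

lemma
  assumes "prob_space Q" and "prob_space P" and sets: "sets Q = sets P" and ac: "absolutely_continuous P Q"
    and u: "u \<in> borel_measurable P" and mgf: "(\<integral>\<^sup>+x. ennreal (exp (u x)) \<partial>P) \<le> ennreal K"
    and K: "0 \<le> K"
  shows integrable_exp_div_RN_deriv: "integrable Q (\<lambda>x. exp (u x) / enn2real (RN_deriv P Q x))"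
    and integral_exp_div_RN_deriv_le: "(\<integral>x. exp (u x) / enn2real (RN_deriv P Q x) \<partial>Q) \<le> K"
proof -
  define v where "v x = exp (u x) / enn2real (RN_deriv P Q x)" for x
  have v_meas: "v \<in> borel_measurable Q"
    using u sets unfolding v_def by (simp cong: measurable_cong_sets)
  have v_nonneg: "0 \<le> v x" for x
    unfolding v_def by simp
  have v_nn: "(\<integral>\<^sup>+x. ennreal (v x) \<partial>Q) \<le> ennreal K"
    unfolding v_def using u assms(2)
    by (intro order.trans[OF nn_integral_div_RN_deriv_le mgf] prob_space_imp_sigma_finite ac sets) auto
  then show "integrable Q (\<lambda>x. exp (u x) / enn2real (RN_deriv P Q x))"
    using v_nonneg v_meas unfolding v_def[symmetric]
    by (auto simp: top_unique less_top[symmetric] intro!: integrableI_nonneg dest: order.trans)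
  show "(\<integral>x. exp (u x) / enn2real (RN_deriv P Q x) \<partial>Q) \<le> K"
    using v_nn v_nonneg v_meas K unfolding v_def[symmetric]
    by (auto simp: integral_eq_nn_integral intro!: enn2real_leI)
qed

lemma integral_le_KL_divergence_add_ln:
  assumes "prob_space Q" and "prob_space P" and sets: "sets Q = sets P"
    and ac: "absolutely_continuous P Q" and KL: "integrable Q (entropy_density (exp 1) P Q)"
    and u: "u \<in> borel_measurable P" "integrable Q u"
    and mgf: "(\<integral>\<^sup>+x. ennreal (exp (u x)) \<partial>P) \<le> ennreal K" and K: "0 < K"
  shows "(\<integral>x. u x \<partial>Q) \<le> KL_divergence (exp 1) P Q + ln K"
proof -
  interpret Q: prob_space Q by fact
  define r where "r x = enn2real (RN_deriv P Q x)" for x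
  define v where "v x = exp (u x) / r x" for x
  have r_pos: "AE x in Q. 0 < r x"
    unfolding r_def using assms(1,2)
    by (intro AE_RN_deriv_pos ac sets prob_space_imp_sigma_finite)
  have KL_eq: "KL_divergence (exp 1) P Q = (\<integral>x. ln (r x) \<partial>Q)"
    by (simp add: KL_divergence_def entropy_density_def r_def log_def comp_def)
  have ln_r: "integrable Q (\<lambda>x. ln (r x))"
    using KL by (simp add: entropy_density_def r_def log_def comp_def)
  have v: "integrable Q v" "(\<integral>x. v x \<partial>Q) \<le> K"
    unfolding v_def r_def using assms(1,2) sets ac u(1) mgf less_imp_le[OF K]
    by (rule integrable_exp_div_RN_deriv, rule integral_exp_div_RN_deriv_le)
  have "(\<integral>x. u x \<partial>Q) - (\<integral>x. ln (r x) \<partial>Q) = (\<integral>x. u x - ln (r x) \<partial>Q)"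
    using u(2) ln_r by simp
  also have "\<dots> \<le> (\<integral>x. v x / K + ln K - 1 \<partial>Q)"
    using u(2) ln_r v(1)
  proof (intro integral_mono_AE; (simp add: Bochner_Integration.integrable_diff)?)
    show "AE x in Q. u x - ln (r x) \<le> v x / K + ln K - 1"
      using r_pos
    proof eventually_elim
      case (elim x)
      have "ln (v x / K) \<le> v x / K - 1"
        using elim K by (intro ln_le_minus_one) (simp add: v_def)
      then show ?case
        using elim K by (simp add: v_def ln_div ln_mult)
    qed
  qed
  also have "\<dots> = (\<integral>x. v x \<partial>Q) / K + ln K - 1"
    using v(1) by (simp add: Q.prob_space)
  also have "\<dots> \<le> ln K"
    using v(2) K by (simp add: field_simps)
  finally show ?thesis
    unfolding KL_eq by simp
qed

lemma integral_le_KL_add_ln: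
  assumes "prob_space Q" and "prob_space P"
    and u: "u \<in> borel_measurable P" "integrable Q u"
    and mgf: "(\<integral>\<^sup>+x. ennreal (exp (u x)) \<partial>P) \<le> ennreal K" and K: "0 < K"
  shows "ereal (\<integral>x. u x \<partial>Q) \<le> KL Q P + ln K"
proof (cases "KL Q P = \<infinity>")
  case False
  then have "sets Q = sets P" "absolutely_continuous P Q" "integrable Q (entropy_density (exp 1) P Q)"
    and "KL Q P = ereal (KL_divergence (exp 1) P Q)"
    unfolding KL_def by (auto split: if_splits)
  with integral_le_KL_divergence_add_ln[OF assms(1,2) _ _ _ u mgf K] show ?thesis
    by simp
qed simp

section \<open>Catoni's function\<close>

definition catoni_phi :: "real \<Rightarrow> real \<Rightarrow> real" where
  "catoni_phi c r = - ln (1 - r + r * exp (- c))"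

lemma catoni_arg_pos:
  fixes r k :: real
  assumes "0 \<le> r" "r \<le> 1" "0 < k"
  shows "0 < 1 - r + r * k"
proof (cases "r = 1")
  case False
  then show ?thesis using assms by (intro add_pos_nonneg) auto
qed (use assms in simp)

lemma catoni_phi_bounds:
  assumes "0 \<le> c" "0 \<le> r" "r \<le> 1"
  shows "0 \<le> catoni_phi c r" "catoni_phi c r \<le> c"
proof -
  have "exp (- c) \<le> 1" using assms by simp
  then have "exp (- c) \<le> 1 - r + r * exp (- c)" "1 - r + r * exp (- c) \<le> 1"
    using assms mult_left_mono[of "exp (- c)" 1 r] mult_left_mono[of "exp (- c)" 1 "1 - r"]
    by (auto simp: algebra_simps)
  moreover have "0 < 1 - r + r * exp (- c)"
    using assms by (intro catoni_arg_pos) auto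
  ultimately have "ln (exp (- c)) \<le> ln (1 - r + r * exp (- c))" "ln (1 - r + r * exp (- c)) \<le> ln 1"
    by (subst ln_le_cancel_iff; simp)+
  then show "0 \<le> catoni_phi c r" "catoni_phi c r \<le> c"
    unfolding catoni_phi_def by auto
qed

lemma catoni_phi_tangent:
  assumes "0 \<le> r" "r \<le> 1" "0 \<le> r0" "r0 \<le> 1"
  shows "catoni_phi c r0 + (1 - exp (- c)) / (1 - r0 + r0 * exp (- c)) * (r - r0) \<le> catoni_phi c r"
proof -
  define y where "y = 1 - r + r * exp (- c)"
  define y0 where "y0 = 1 - r0 + r0 * exp (- c)"
  have y: "0 < y" "0 < y0"
    unfolding y_def y0_def using assms by (auto intro!: catoni_arg_pos)
  have "ln (y / y0) \<le> y / y0 - 1"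
    using y by (intro ln_le_minus_one) auto
  moreover have "y / y0 - 1 = - ((1 - exp (- c)) / y0 * (r - r0))"
    using y unfolding y_def y0_def by (simp add: field_simps)
  ultimately show ?thesis
    using y unfolding catoni_phi_def y_def[symmetric] y0_def[symmetric] by (simp add: ln_div)
qed

lemma catoni_phi_integral_le:
  assumes "prob_space Q" and g: "g \<in> borel_measurable Q" "\<And>x. 0 \<le> g x \<and> g x \<le> 1" and c: "0 \<le> c"
  shows "catoni_phi c (\<integral>x. g x \<partial>Q) \<le> (\<integral>x. catoni_phi c (g x) \<partial>Q)"
proof -
  interpret prob_space Q by fact
  define r0 where "r0 = (\<integral>x. g x \<partial>Q)"
  define s where "s = (1 - exp (- c)) / (1 - r0 + r0 * exp (- c))"
  have int_g: "integrable Q g"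
    using g by (intro integrable_const_bound[where B=1]) auto
  have "r0 \<le> (\<integral>x. 1 \<partial>Q)"
    unfolding r0_def using g int_g by (intro integral_mono) auto
  then have r0: "0 \<le> r0" "r0 \<le> 1"
    unfolding r0_def using g by (auto simp: prob_space intro!: integral_nonneg_AE)
  have "catoni_phi c r0 = (\<integral>x. catoni_phi c r0 + s * (g x - r0) \<partial>Q)"
    using int_g by (simp add: prob_space r0_def)
  also have "\<dots> \<le> (\<integral>x. catoni_phi c (g x) \<partial>Q)"
  proof (rule integral_mono)
    show "integrable Q (\<lambda>x. catoni_phi c r0 + s * (g x - r0))"
      using int_g by simp
    show "integrable Q (\<lambda>x. catoni_phi c (g x))"
      using g c catoni_phi_bounds[OF c] unfolding catoni_phi_def
      by (intro integrable_const_bound[where B=c]) auto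
    show "catoni_phi c r0 + s * (g x - r0) \<le> catoni_phi c (g x)" for x
      unfolding s_def using g r0 by (intro catoni_phi_tangent) auto
  qed
  finally show ?thesis unfolding r0_def .
qed

lemma exp_neg_mult_le_chord:
  fixes c t :: real
  assumes "0 \<le> t" "t \<le> 1"
  shows "exp (- c * t) \<le> 1 - t + t * exp (- c)"
  using convex_onD[OF exp_convex, of t 0 "- c"] assms by (simp add: algebra_simps)

lemma nn_integral_exp_neg_mult_le:
  assumes "prob_space D" and l: "l \<in> borel_measurable D" "\<And>z. 0 \<le> l z \<and> l z \<le> 1"
  shows "(\<integral>\<^sup>+z. ennreal (exp (- c * l z)) \<partial>D)
    \<le> ennreal (1 - (\<integral>z. l z \<partial>D) + (\<integral>z. l z \<partial>D) * exp (- c))"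
proof -
  interpret prob_space D by fact
  have int_l: "integrable D l"
    using l by (intro integrable_const_bound[where B=1]) auto
  have "(\<integral>\<^sup>+z. ennreal (exp (- c * l z)) \<partial>D) \<le> (\<integral>\<^sup>+z. ennreal (1 - l z + l z * exp (- c)) \<partial>D)"
    using l by (intro nn_integral_mono ennreal_leI exp_neg_mult_le_chord) auto
  also have "\<dots> = ennreal (\<integral>z. 1 - l z + l z * exp (- c) \<partial>D)"
    using int_l l by (intro nn_integral_eq_integral) (auto intro!: add_nonneg_nonneg)
  also have "(\<integral>z. 1 - l z + l z * exp (- c) \<partial>D) = 1 - (\<integral>z. l z \<partial>D) + (\<integral>z. l z \<partial>D) * exp (- c)"
    using int_l by (simp add: prob_space)
  finally show ?thesis .
qed

lemma nn_integral_exp_catoni_le_1: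
  assumes D: "prob_space D" and l: "l \<in> borel_measurable D" "\<And>z. 0 \<le> l z \<and> l z \<le> 1"
  shows "(\<integral>\<^sup>+s. ennreal (exp (real m * catoni_phi c (\<integral>z. l z \<partial>D) - c * (\<Sum>j<m. l (s j))))
           \<partial>PiM {..<m} (\<lambda>_. D)) \<le> 1"
proof -
  interpret D: prob_space D by fact
  interpret product_sigma_finite "\<lambda>_. D"
    by (simp add: product_sigma_finite_def D.sigma_finite_measure_axioms)
  define R where "R = (\<integral>z. l z \<partial>D)"
  define y where "y = 1 - R + R * exp (- c)"
  have "R \<le> (\<integral>z. 1 \<partial>D)"
    unfolding R_def using l by (intro integral_mono D.integrable_const_bound[where B=1]) auto
  then have y: "0 < y"
    unfolding y_def R_def using l by (intro catoni_arg_pos integral_nonneg_AE) (auto simp: D.prob_space)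
  have exp_eq: "exp (real m * catoni_phi c R - c * (\<Sum>j<m. l (s j)))
      = inverse y ^ m * (\<Prod>j<m. exp (- c * l (s j)))" for s
    using y by (simp add: catoni_phi_def y_def exp_diff exp_of_nat_mult exp_minus exp_sum
        sum_distrib_left divide_inverse power_inverse prod_inversef[symmetric, unfolded comp_def])
  have "(\<integral>\<^sup>+s. ennreal (exp (real m * catoni_phi c R - c * (\<Sum>j<m. l (s j)))) \<partial>PiM {..<m} (\<lambda>_. D))
      = ennreal (inverse y ^ m) * (\<integral>\<^sup>+s. (\<Prod>j<m. ennreal (exp (- c * l (s j)))) \<partial>PiM {..<m} (\<lambda>_. D))"
    using y l(1) unfolding exp_eq
    by (subst nn_integral_cmult[symmetric]) (auto simp: ennreal_mult prod_ennreal prod_nonneg)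
  also have "\<dots> = ennreal (inverse y ^ m) * (\<Prod>j<m. \<integral>\<^sup>+z. ennreal (exp (- c * l z)) \<partial>D)"
    using l(1) by (subst product_nn_integral_prod) auto
  also have "\<dots> \<le> ennreal (inverse y ^ m) * ennreal y ^ m"
    using nn_integral_exp_neg_mult_le[OF D l, of c] unfolding y_def R_def
    by (auto simp: prod_constant intro!: mult_left_mono power_mono)
  also have "\<dots> = 1"
    using y by (simp add: ennreal_power[symmetric] ennreal_mult[symmetric] power_mult_distrib[symmetric])
  finally show ?thesis unfolding R_def .
qed

section \<open>Exponential moments of the multi-task exponent\<close>

lemma nn_integral_PiM_prod_le_1:
  assumes I: "finite I" and M: "\<And>i. i \<in> I \<Longrightarrow> prob_space (M i)"
    and f: "\<And>i. i \<in> I \<Longrightarrow> f i \<in> borel_measurable (M i)" "\<And>i. i \<in> I \<Longrightarrow> integral\<^sup>N (M i) (f i) \<le> 1"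
  shows "(\<integral>\<^sup>+x. (\<Prod>i\<in>I. f i (x i)) \<partial>PiM I M) \<le> 1"
proof -
  \<comment> \<open>\<open>product_sigma_finite\<close> needs every factor to be \<open>\<sigma>\<close>-finite, not only those indexed by \<open>I\<close>\<close>
  define M' where "M' i = (if i \<in> I then M i else return (count_space UNIV) undefined)" for i
  interpret product_sigma_finite M'
    unfolding product_sigma_finite_def M'_def
    using M by (auto intro!: prob_space_imp_sigma_finite prob_space_return)
  have "PiM I M = PiM I M'"
    unfolding M'_def by (rule PiM_cong) auto
  then have "(\<integral>\<^sup>+x. (\<Prod>i\<in>I. f i (x i)) \<partial>PiM I M) = (\<Prod>i\<in>I. integral\<^sup>N (M' i) (f i))"
    using I f(1) by (simp add: product_nn_integral_prod M'_def)
  also have "\<dots> \<le> 1"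
    using f(2) by (intro prod_le_1) (simp add: M'_def)
  finally show ?thesis .
qed

lemma (in prob_space) Markov_inequality_event:
  assumes W: "W \<in> borel_measurable M" "(\<integral>\<^sup>+x. W x \<partial>M) \<le> 1" and \<delta>: "0 < \<delta>"
  shows "\<exists>A\<in>events. 1 - \<delta> \<le> prob A \<and> (\<forall>x\<in>A. W x \<le> ennreal (1 / \<delta>))"
proof -
  define B where "B = {x \<in> space M. 1 \<le> ennreal \<delta> * W x}"
  have B: "B \<in> events"
    unfolding B_def using W(1) by measurable
  have "emeasure M B \<le> ennreal \<delta> * (\<integral>\<^sup>+x. W x * indicator (space M) x \<partial>M)"
    unfolding B_def using W(1) by (intro nn_integral_Markov_inequality) auto
  also have "(\<integral>\<^sup>+x. W x * indicator (space M) x \<partial>M) = (\<integral>\<^sup>+x. W x \<partial>M)"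
    by (intro nn_integral_cong) simp
  also have "ennreal \<delta> * (\<integral>\<^sup>+x. W x \<partial>M) \<le> ennreal \<delta>"
    using mult_left_mono[OF W(2), of "ennreal \<delta>"] by simp
  finally have "prob B \<le> \<delta>"
    using \<delta> by (simp add: emeasure_eq_measure)
  moreover have "W x \<le> ennreal (1 / \<delta>)" if "x \<in> space M - B" for x
  proof (cases "W x" rule: ennreal_cases)
    case (real w)
    with that \<delta> have "\<delta> * w < 1"
      by (simp add: B_def ennreal_mult[symmetric] not_le ennreal_less_one_iff)
    with real \<delta> show ?thesis
      by (auto intro!: ennreal_leI simp: field_simps)
  qed (use that \<delta> in \<open>auto simp: B_def ennreal_mult_top\<close>)
  ultimately show ?thesis
    using B prob_compl[OF B] by (intro bexI[of _ "space M - B"]) auto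
qed

lemma neg_sum_ln_eq_catoni_phi:
  "- (\<Sum>i<n. real (m i) * ln (1 - R i + R i * exp (- lam i / (real n * real (m i)))))
     = (\<Sum>i<n. real (m i) * catoni_phi (lam i / (real n * real (m i))) (R i)
          - lam i / (real n * real (m i)) * (\<Sum>j<m i. rloss (l i) (Qs i) (S i j)))
       + (1 / real n) * (\<Sum>i<n. lam i * emp_risk (l i) (m i) (S i) (Qs i))"
proof -
  have "(1 / real n) * (\<Sum>i<n. lam i * emp_risk (l i) (m i) (S i) (Qs i))
      = (\<Sum>i<n. lam i / (real n * real (m i)) * (\<Sum>j<m i. rloss (l i) (Qs i) (S i j)))"
    by (simp add: emp_risk_def sum_distrib_left sum_divide_distrib)
  then show ?thesis
    by (simp add: catoni_phi_def sum_subtractf sum_negf)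
qed

locale multitask_losses =
  fixes n :: nat and m :: "nat \<Rightarrow> nat" and F :: "'f measure" and Z :: "'z measure"
    and D :: "nat \<Rightarrow> 'z measure" and l :: "nat \<Rightarrow> 'f \<Rightarrow> 'z \<Rightarrow> real"
  assumes D_prob: "\<And>i. i < n \<Longrightarrow> prob_space (D i)"
    and D_sets: "\<And>i. i < n \<Longrightarrow> sets (D i) = sets Z"
    and l_meas: "\<And>i. i < n \<Longrightarrow> (\<lambda>(f, z). l i f z) \<in> borel_measurable (F \<Otimes>\<^sub>M Z)"
    and l_range: "\<And>i f z. i < n \<Longrightarrow> 0 \<le> l i f z \<and> l i f z \<le> 1"
begin

definition samples :: "(nat \<Rightarrow> nat \<Rightarrow> 'z) measure" where
  "samples = (\<Pi>\<^sub>M i\<in>{..<n}. \<Pi>\<^sub>M j\<in>{..<m i}. D i)"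

definition task_risk :: "nat \<Rightarrow> 'f \<Rightarrow> real" where
  "task_risk i f = (\<integral>z. l i f z \<partial>D i)"

definition task_exponent :: "real \<Rightarrow> nat \<Rightarrow> 'f \<Rightarrow> (nat \<Rightarrow> 'z) \<Rightarrow> real" where
  "task_exponent c i f s = real (m i) * catoni_phi c (task_risk i f) - c * (\<Sum>j<m i. l i f (s j))"

definition exponent :: "(nat \<Rightarrow> real) \<Rightarrow> (nat \<Rightarrow> 'f) \<Rightarrow> (nat \<Rightarrow> nat \<Rightarrow> 'z) \<Rightarrow> real" where
  "exponent c fs S = (\<Sum>i<n. task_exponent (c i) i (fs i) (S i))"

lemma prob_space_samples: "prob_space samples"
  unfolding samples_def using D_prob by (intro prob_space_PiM) auto

lemma measurable_loss_predictor:
  assumes "i < n" "z \<in> space Z"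
  shows "(\<lambda>f. l i f z) \<in> borel_measurable F"
  using measurable_comp[OF measurable_Pair2'[OF assms(2)] l_meas[OF assms(1)]] by (simp add: comp_def)

lemma measurable_loss_sample:
  assumes "i < n" "f \<in> space F"
  shows "(\<lambda>z. l i f z) \<in> borel_measurable (D i)"
  using measurable_comp[OF measurable_Pair1'[OF assms(2)] l_meas[OF assms(1)]] D_sets[OF assms(1)]
  by (simp add: comp_def cong: measurable_cong_sets)

lemma measurable_loss_pair:
  assumes "i < n" "sets Q = sets F"
  shows "(\<lambda>(f, z). l i f z) \<in> borel_measurable (Q \<Otimes>\<^sub>M D i)"
proof -
  have "sets (Q \<Otimes>\<^sub>M D i) = sets (F \<Otimes>\<^sub>M Z)"
    using assms D_sets by (intro sets_pair_measure_cong) auto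
  then show ?thesis
    using l_meas[OF assms(1)] by (simp cong: measurable_cong_sets)
qed

lemma measurable_task_risk: "i < n \<Longrightarrow> task_risk i \<in> borel_measurable F"
  unfolding task_risk_def[abs_def]
  using measurable_loss_pair D_prob
  by (intro sigma_finite_measure.borel_measurable_lebesgue_integral prob_space_imp_sigma_finite) auto

lemma task_risk_bounds:
  assumes "i < n"
  shows "0 \<le> task_risk i f \<and> task_risk i f \<le> 1"
proof (cases "integrable (D i) (\<lambda>z. l i f z)")
  case True
  interpret prob_space "D i" by (rule D_prob[OF assms])
  have "task_risk i f \<le> (\<integral>z. 1 \<partial>D i)"
    unfolding task_risk_def using True l_range[OF assms] by (intro integral_mono) auto
  then show ?thesis
    unfolding task_risk_def using l_range[OF assms] by (auto simp: prob_space intro!: integral_nonneg_AE)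
qed (simp add: task_risk_def not_integrable_integral_eq)

lemma risk_eq_integral_task_risk:
  assumes "i < n" "Q \<in> space (prob_algebra F)"
  shows "risk (l i) (D i) Q = (\<integral>f. task_risk i f \<partial>Q)"
proof -
  have Q: "prob_space Q" "sets Q = sets F"
    using assms(2) by (auto simp: space_prob_algebra)
  interpret pair_prob_space Q "D i"
    using Q D_prob[OF assms(1)] by (simp add: pair_prob_space_def pair_sigma_finite_def prob_space_imp_sigma_finite)
  have "integrable (Q \<Otimes>\<^sub>M D i) (\<lambda>(f, z). l i f z)"
    using measurable_loss_pair[OF assms(1) Q(2)] l_range[OF assms(1)]
    by (intro P.integrable_const_bound[where B=1]) auto
  then show ?thesis
    unfolding risk_def rloss_def task_risk_def by (rule Fubini_integral)
qed

lemma measurable_task_exponent: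
  assumes i: "i < n"
  shows "(\<lambda>(f, s). task_exponent c i f s) \<in> borel_measurable (F \<Otimes>\<^sub>M PiM {..<m i} (\<lambda>_. D i))"
proof -
  have "(\<lambda>x. snd x j) \<in> F \<Otimes>\<^sub>M PiM {..<m i} (\<lambda>_. D i) \<rightarrow>\<^sub>M Z" if "j < m i" for j
    using measurable_compose[OF measurable_snd measurable_component_singleton[of j "{..<m i}"]] that D_sets[OF i]
    by (simp cong: measurable_cong_sets)
  then have "(\<lambda>x. (fst x, snd x j)) \<in> F \<Otimes>\<^sub>M PiM {..<m i} (\<lambda>_. D i) \<rightarrow>\<^sub>M F \<Otimes>\<^sub>M Z"
    if "j < m i" for j
    using that by (intro measurable_Pair measurable_fst)
  then have "(\<lambda>x. l i (fst x) (snd x j)) \<in> borel_measurable (F \<Otimes>\<^sub>M PiM {..<m i} (\<lambda>_. D i))"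
    if "j < m i" for j
    using measurable_compose[OF _ l_meas[OF i], of "\<lambda>x. (fst x, snd x j)"] that by simp
  moreover have "(\<lambda>x. task_risk i (fst x)) \<in> borel_measurable (F \<Otimes>\<^sub>M PiM {..<m i} (\<lambda>_. D i))"
    using measurable_compose[OF measurable_fst measurable_task_risk[OF i]] .
  ultimately show ?thesis
    unfolding task_exponent_def catoni_phi_def case_prod_beta
    by (intro borel_measurable_diff borel_measurable_times borel_measurable_sum borel_measurable_const
        borel_measurable_uminus borel_measurable_ln borel_measurable_add) auto
qed

lemma measurable_task_exponent_predictor:
  assumes "i < n" "s \<in> space (PiM {..<m i} (\<lambda>_. D i))"
  shows "(\<lambda>f. task_exponent c i f s) \<in> borel_measurable F"
  using measurable_compose[OF measurable_Pair2'[OF assms(2)] measurable_task_exponent[OF assms(1)]] by simp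

lemma task_exponent_abs_le:
  assumes "i < n" "0 \<le> c"
  shows "\<bar>task_exponent c i f s\<bar> \<le> real (m i) * c"
proof -
  have "0 \<le> (\<Sum>j<m i. l i f (s j))"
    using l_range[OF assms(1)] by (simp add: sum_nonneg)
  moreover have "(\<Sum>j<m i. l i f (s j)) \<le> real (m i)"
    using sum_mono[of "{..<m i}" "\<lambda>j. l i f (s j)" "\<lambda>_. 1"] l_range[OF assms(1)] by simp
  moreover have "0 \<le> catoni_phi c (task_risk i f)" "catoni_phi c (task_risk i f) \<le> c"
    using catoni_phi_bounds[OF assms(2)] task_risk_bounds[OF assms(1)] by auto
  ultimately have "0 \<le> c * (\<Sum>j<m i. l i f (s j))" "c * (\<Sum>j<m i. l i f (s j)) \<le> real (m i) * c"
    "0 \<le> real (m i) * catoni_phi c (task_risk i f)" "real (m i) * catoni_phi c (task_risk i f) \<le> real (m i) * c"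
    using assms(2) by (simp_all add: mult_left_mono mult_right_mono mult.commute[of c])
  then show ?thesis
    unfolding task_exponent_def by linarith
qed

lemma nn_integral_exp_task_exponent_le_1:
  assumes "i < n" "f \<in> space F"
  shows "(\<integral>\<^sup>+s. ennreal (exp (task_exponent c i f s)) \<partial>PiM {..<m i} (\<lambda>_. D i)) \<le> 1"
  unfolding task_exponent_def task_risk_def
  using nn_integral_exp_catoni_le_1[OF D_prob measurable_loss_sample l_range, OF assms(1) assms assms(1)] .

lemma nn_integral_exp_exponent_le_1:
  assumes fs: "fs \<in> (\<Pi>\<^sub>E i\<in>{..<n}. space F)"
  shows "(\<integral>\<^sup>+S. ennreal (exp (exponent c fs S)) \<partial>samples) \<le> 1"
proof -
  have "(\<lambda>s. ennreal (exp (task_exponent (c i) i (fs i) s))) \<in> borel_measurable (PiM {..<m i} (\<lambda>_. D i))"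
    if i: "i < n" for i
  proof -
    have "fs i \<in> space F" using fs i by auto
    from measurable_compose[OF measurable_Pair1'[OF this] measurable_task_exponent[OF i, of "c i"]]
    have "(\<lambda>s. task_exponent (c i) i (fs i) s) \<in> borel_measurable (PiM {..<m i} (\<lambda>_. D i))"
      by simp
    then show ?thesis
      by (intro measurable_compose[OF _ measurable_ennreal] measurable_compose[OF _ borel_measurable_exp])
  qed
  then have "(\<integral>\<^sup>+S. (\<Prod>i<n. ennreal (exp (task_exponent (c i) i (fs i) (S i)))) \<partial>samples) \<le> 1"
    unfolding samples_def using fs
    by (intro nn_integral_PiM_prod_le_1 prob_space_PiM D_prob nn_integral_exp_task_exponent_le_1 finite_lessThan)
      (auto simp: PiE_iff)
  then show ?thesis
    by (simp add: exponent_def exp_sum prod_ennreal)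
qed

lemma measurable_exponent:
  "(\<lambda>(fs, S). exponent c fs S) \<in> borel_measurable (PiM {..<n} (\<lambda>_. F) \<Otimes>\<^sub>M samples)"
proof -
  have "(\<lambda>x. (fst x i, snd x i)) \<in> PiM {..<n} (\<lambda>_. F) \<Otimes>\<^sub>M samples \<rightarrow>\<^sub>M F \<Otimes>\<^sub>M PiM {..<m i} (\<lambda>_. D i)"
    if "i < n" for i
    unfolding samples_def using that
    by (intro measurable_Pair measurable_compose[OF measurable_fst measurable_component_singleton]
        measurable_compose[OF measurable_snd measurable_component_singleton]) auto
  from measurable_compose[OF this measurable_task_exponent]
  have "(\<lambda>x. task_exponent (c i) i (fst x i) (snd x i)) \<in> borel_measurable (PiM {..<n} (\<lambda>_. F) \<Otimes>\<^sub>M samples)"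
    if "i < n" for i
    using that by simp
  then show ?thesis
    unfolding exponent_def case_prod_beta by (intro borel_measurable_sum) auto
qed

lemma
  assumes P: "prob_space P" "sets P = sets (X \<Otimes>\<^sub>M PiM {..<n} (\<lambda>_. F))"
  shows measurable_nn_integral_exp_exponent:
      "(\<lambda>S. \<integral>\<^sup>+\<omega>. ennreal (exp (exponent c (snd \<omega>) S)) \<partial>P) \<in> borel_measurable samples"
    and nn_integral_nn_integral_exp_exponent_le_1:
      "(\<integral>\<^sup>+S. (\<integral>\<^sup>+\<omega>. ennreal (exp (exponent c (snd \<omega>) S)) \<partial>P) \<partial>samples) \<le> 1"
proof -
  interpret P: prob_space P by fact
  have P_samples: "pair_sigma_finite P samples"
    using prob_space_samples by (simp add: pair_sigma_finite_def P.sigma_finite_measure_axioms prob_space_imp_sigma_finite)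
  have "(\<lambda>x. (snd (fst x), snd x)) \<in> P \<Otimes>\<^sub>M samples \<rightarrow>\<^sub>M PiM {..<n} (\<lambda>_. F) \<Otimes>\<^sub>M samples"
    using P(2) by (auto intro!: measurable_Pair measurable_compose[OF measurable_fst] cong: measurable_cong_sets)
  from measurable_compose[OF this measurable_exponent]
  have meas: "(\<lambda>(\<omega>, S). ennreal (exp (exponent c (snd \<omega>) S))) \<in> borel_measurable (P \<Otimes>\<^sub>M samples)"
    unfolding case_prod_beta
    by (intro measurable_compose[OF _ measurable_ennreal] measurable_compose[OF _ borel_measurable_exp]) simp
  then have "(\<lambda>(S, \<omega>). ennreal (exp (exponent c (snd \<omega>) S))) \<in> borel_measurable (samples \<Otimes>\<^sub>M P)"
    by (subst measurable_pair_swap_iff) (simp add: case_prod_beta')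
  then show "(\<lambda>S. \<integral>\<^sup>+\<omega>. ennreal (exp (exponent c (snd \<omega>) S)) \<partial>P) \<in> borel_measurable samples"
    by (rule P.borel_measurable_nn_integral)
  have "snd \<omega> \<in> (\<Pi>\<^sub>E i\<in>{..<n}. space F)" if "\<omega> \<in> space P" for \<omega>
    using that sets_eq_imp_space_eq[OF P(2)] by (auto simp: space_pair_measure space_PiM)
  then have "(\<integral>\<^sup>+\<omega>. (\<integral>\<^sup>+S. ennreal (exp (exponent c (snd \<omega>) S)) \<partial>samples) \<partial>P) \<le> (\<integral>\<^sup>+\<omega>. 1 \<partial>P)"
    by (intro nn_integral_mono nn_integral_exp_exponent_le_1)
  then show "(\<integral>\<^sup>+S. (\<integral>\<^sup>+\<omega>. ennreal (exp (exponent c (snd \<omega>) S)) \<partial>P) \<partial>samples) \<le> 1"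
    using pair_sigma_finite.Fubini'[OF P_samples meas] by (simp add: P.emeasure_space_1)
qed

lemma
  assumes i: "i < n" and Q: "Q \<in> space (prob_algebra F)"
    and s: "s \<in> space (PiM {..<m i} (\<lambda>_. D i))" and c: "0 \<le> c"
  shows integrable_task_exponent: "integrable Q (\<lambda>f. task_exponent c i f s)"
    and integral_task_exponent: "(\<integral>f. task_exponent c i f s \<partial>Q)
      = real (m i) * (\<integral>f. catoni_phi c (task_risk i f) \<partial>Q) - c * (\<Sum>j<m i. rloss (l i) Q (s j))"
proof -
  have Q': "prob_space Q" "sets Q = sets F"
    using Q by (auto simp: space_prob_algebra)
  interpret Q: prob_space Q by (fact Q'(1))
  show "integrable Q (\<lambda>f. task_exponent c i f s)"
    using measurable_task_exponent_predictor[OF i s] task_exponent_abs_le[OF i c] Q'(2)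
    by (intro Q.integrable_const_bound[where B="real (m i) * c"]) (auto cong: measurable_cong_sets)
  have int_phi: "integrable Q (\<lambda>f. catoni_phi c (task_risk i f))"
    using measurable_task_risk[OF i] task_risk_bounds[OF i] catoni_phi_bounds[OF c] Q'(2)
    unfolding catoni_phi_def by (intro Q.integrable_const_bound[where B=c]) (auto cong: measurable_cong_sets)
  have "s j \<in> space Z" if "j < m i" for j
    using s that sets_eq_imp_space_eq[OF D_sets[OF i]] by (auto simp: space_PiM)
  then have int_l: "integrable Q (\<lambda>f. l i f (s j))" if "j < m i" for j
    using measurable_loss_predictor[OF i] l_range[OF i] Q'(2) that
    by (intro Q.integrable_const_bound[where B=1]) (auto cong: measurable_cong_sets)
  then have "integrable Q (\<lambda>f. c * (\<Sum>j<m i. l i f (s j)))"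
    by (intro integrable_mult_right Bochner_Integration.integrable_sum) auto
  then have "(\<integral>f. task_exponent c i f s \<partial>Q)
      = real (m i) * (\<integral>f. catoni_phi c (task_risk i f) \<partial>Q) - (\<integral>f. c * (\<Sum>j<m i. l i f (s j)) \<partial>Q)"
    unfolding task_exponent_def using int_phi by (subst Bochner_Integration.integral_diff) auto
  also have "(\<integral>f. c * (\<Sum>j<m i. l i f (s j)) \<partial>Q) = c * (\<Sum>j<m i. rloss (l i) Q (s j))"
    unfolding rloss_def using int_l by (simp add: Bochner_Integration.integral_sum)
  finally show "(\<integral>f. task_exponent c i f s \<partial>Q)
      = real (m i) * (\<integral>f. catoni_phi c (task_risk i f) \<partial>Q) - c * (\<Sum>j<m i. rloss (l i) Q (s j))" .
qed

lemma catoni_risk_le_integral_task_exponent: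
  assumes i: "i < n" and Q: "Q \<in> space (prob_algebra F)"
    and s: "s \<in> space (PiM {..<m i} (\<lambda>_. D i))" and c: "0 \<le> c"
  shows "real (m i) * catoni_phi c (risk (l i) (D i) Q) - c * (\<Sum>j<m i. rloss (l i) Q (s j))
    \<le> (\<integral>f. task_exponent c i f s \<partial>Q)"
proof -
  have Q': "prob_space Q" "sets Q = sets F"
    using Q by (auto simp: space_prob_algebra)
  have "task_risk i \<in> borel_measurable Q"
    using measurable_task_risk[OF i] Q'(2) by (simp cong: measurable_cong_sets)
  from catoni_phi_integral_le[OF Q'(1) this task_risk_bounds[OF i] c]
  show ?thesis
    unfolding integral_task_exponent[OF assms] risk_eq_integral_task_risk[OF i Q]
    by (simp add: mult_left_mono)
qed

lemma
  assumes N: "prob_space N" and Qs: "\<And>i. i < n \<Longrightarrow> Qs i \<in> space (prob_algebra F)"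
    and S: "S \<in> space samples" and c: "\<And>i. i < n \<Longrightarrow> 0 \<le> c i"
  shows integrable_exponent_posterior: "integrable (N \<Otimes>\<^sub>M PiM {..<n} Qs) (\<lambda>\<omega>. exponent c (snd \<omega>) S)"
    and catoni_risk_le_integral_exponent:
      "(\<Sum>i<n. real (m i) * catoni_phi (c i) (risk (l i) (D i) (Qs i)) - c i * (\<Sum>j<m i. rloss (l i) (Qs i) (S i j)))
         \<le> (\<integral>\<omega>. exponent c (snd \<omega>) S \<partial>(N \<Otimes>\<^sub>M PiM {..<n} Qs))"
proof -
  have Qs': "prob_space (Qs i)" "sets (Qs i) = sets F" if "i < n" for i
    using Qs[OF that] by (auto simp: space_prob_algebra)
  have S': "S i \<in> space (PiM {..<m i} (\<lambda>_. D i))" if "i < n" for i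
    using S that by (auto simp: samples_def space_PiM)
  have meas: "(\<lambda>f. task_exponent (c i) i f (S i)) \<in> borel_measurable (Qs i)" if "i < n" for i
    using measurable_task_exponent_predictor[OF that S'[OF that]] Qs'(2)[OF that]
    by (simp cong: measurable_cong_sets)
  have int: "integrable (N \<Otimes>\<^sub>M PiM {..<n} Qs) (\<lambda>\<omega>. task_exponent (c i) i (snd \<omega> i) (S i))" if "i < n" for i
  proof (subst integrable_pair_PiM_component)
    show "integrable (Qs i) (\<lambda>f. task_exponent (c i) i f (S i))"
      using that by (intro integrable_task_exponent Qs S' c)
  qed (use N Qs' meas that in auto)
  then show "integrable (N \<Otimes>\<^sub>M PiM {..<n} Qs) (\<lambda>\<omega>. exponent c (snd \<omega>) S)"
    unfolding exponent_def by (intro Bochner_Integration.integrable_sum) auto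
  have "(\<integral>\<omega>. exponent c (snd \<omega>) S \<partial>(N \<Otimes>\<^sub>M PiM {..<n} Qs))
      = (\<Sum>i<n. \<integral>f. task_exponent (c i) i f (S i) \<partial>Qs i)"
    unfolding exponent_def using int
  proof (simp add: Bochner_Integration.integral_sum, intro sum.cong refl)
    fix i assume "i \<in> {..<n}"
    then show "(\<integral>\<omega>. task_exponent (c i) i (snd \<omega> i) (S i) \<partial>(N \<Otimes>\<^sub>M PiM {..<n} Qs))
        = (\<integral>f. task_exponent (c i) i f (S i) \<partial>Qs i)"
      by (intro integral_pair_PiM_component N Qs' meas) auto
  qed
  then show "(\<Sum>i<n. real (m i) * catoni_phi (c i) (risk (l i) (D i) (Qs i)) - c i * (\<Sum>j<m i. rloss (l i) (Qs i) (S i j)))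
      \<le> (\<integral>\<omega>. exponent c (snd \<omega>) S \<partial>(N \<Otimes>\<^sub>M PiM {..<n} Qs))"
    by (simp only:) (intro sum_mono catoni_risk_le_integral_task_exponent Qs S' c; simp)
qed

lemma measurable_exponent_snd:
  assumes "sets P = sets (X \<Otimes>\<^sub>M PiM {..<n} (\<lambda>_. F))" "S \<in> space samples"
  shows "(\<lambda>\<omega>. exponent c (snd \<omega>) S) \<in> borel_measurable P"
proof -
  have "(\<lambda>\<omega>. (snd \<omega>, S)) \<in> P \<rightarrow>\<^sub>M PiM {..<n} (\<lambda>_. F) \<Otimes>\<^sub>M samples"
    using assms by (auto intro!: measurable_Pair cong: measurable_cong_sets)
  from measurable_compose[OF this measurable_exponent] show ?thesis
    by simp
qed

lemma catoni_bound_of_prior_mgf: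
  fixes lam :: "nat \<Rightarrow> real"
  defines "c \<equiv> \<lambda>i. lam i / (real n * real (m i))"
  assumes P: "prob_space P" "sets P = sets (prob_algebra F \<Otimes>\<^sub>M PiM {..<n} (\<lambda>_. F))"
    and lam: "\<And>i. i < n \<Longrightarrow> 0 \<le> lam i"
    and S: "S \<in> space samples" and HQ: "HQ \<in> space (prob_algebra (prob_algebra F))"
    and Qs: "\<forall>i<n. Qs i \<in> space (prob_algebra F)"
    and mgf: "(\<integral>\<^sup>+\<omega>. ennreal (exp (exponent c (snd \<omega>) S)) \<partial>P) \<le> ennreal K" and K: "0 < K"
  shows "ereal (- (\<Sum>i<n. real (m i) * ln (1 - risk (l i) (D i) (Qs i)
            + risk (l i) (D i) (Qs i) * exp (- lam i / (real n * real (m i))))))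
         \<le> ereal ((1 / real n) * (\<Sum>i<n. lam i * emp_risk (l i) (m i) (S i) (Qs i)))
           + KL (joint_post n HQ Qs F) P + ereal (ln K)"
proof -
  have c: "0 \<le> c i" if "i < n" for i
    using lam[OF that] unfolding c_def by simp
  have HQ': "prob_space HQ"
    using HQ by (simp add: space_prob_algebra)
  have "- (\<Sum>i<n. real (m i) * ln (1 - risk (l i) (D i) (Qs i)
            + risk (l i) (D i) (Qs i) * exp (- lam i / (real n * real (m i)))))
      \<le> (1 / real n) * (\<Sum>i<n. lam i * emp_risk (l i) (m i) (S i) (Qs i))
        + (\<integral>\<omega>. exponent c (snd \<omega>) S \<partial>joint_post n HQ Qs F)"
    unfolding neg_sum_ln_eq_catoni_phi[where l=l and Qs=Qs and S=S] joint_post_def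
    using catoni_risk_le_integral_exponent[OF HQ' _ S c, of Qs] Qs by (simp add: c_def)
  then have "ereal (- (\<Sum>i<n. real (m i) * ln (1 - risk (l i) (D i) (Qs i)
            + risk (l i) (D i) (Qs i) * exp (- lam i / (real n * real (m i))))))
      \<le> ereal ((1 / real n) * (\<Sum>i<n. lam i * emp_risk (l i) (m i) (S i) (Qs i)))
        + ereal (\<integral>\<omega>. exponent c (snd \<omega>) S \<partial>joint_post n HQ Qs F)"
    by simp
  also have "ereal (\<integral>\<omega>. exponent c (snd \<omega>) S \<partial>joint_post n HQ Qs F) \<le> KL (joint_post n HQ Qs F) P + ln K"
    using HQ HQ' Qs S c P mgf K
    by (intro integral_le_KL_add_ln prob_space_joint_post measurable_exponent_snd)
      (auto simp: joint_post_def integrable_exponent_posterior)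
  finally show ?thesis
    by (simp add: add.assoc add_left_mono)
qed

end

theorem theorem4:
  fixes n :: nat and m :: "nat \<Rightarrow> nat"
    and F :: "'f measure" and Z :: "'z measure"
    and D :: "nat \<Rightarrow> 'z measure"
    and l :: "nat \<Rightarrow> 'f \<Rightarrow> 'z \<Rightarrow> real"
    and HP :: "'f measure measure"
    and \<delta> :: real and lam :: "nat \<Rightarrow> real"
  assumes n_pos: "0 < n"
    and m_pos: "\<And>i. i < n \<Longrightarrow> 1 \<le> m i"
    and D_prob: "\<And>i. i < n \<Longrightarrow> prob_space (D i)"
    and D_sets: "\<And>i. i < n \<Longrightarrow> sets (D i) = sets Z"
    and l_meas: "\<And>i. i < n \<Longrightarrow> (\<lambda>(f, z). l i f z) \<in> borel_measurable (F \<Otimes>\<^sub>M Z)"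
    and l_range: "\<And>i f z. i < n \<Longrightarrow> 0 \<le> l i f z \<and> l i f z \<le> 1"
    and HP_prob: "HP \<in> space (prob_algebra (prob_algebra F))"
    and delta_pos: "0 < \<delta>"
    and lam_pos: "\<And>i. i < n \<Longrightarrow> 0 < lam i"
  shows "\<exists>A \<in> sets (\<Pi>\<^sub>M i\<in>{..<n}. \<Pi>\<^sub>M j\<in>{..<m i}. D i).
           measure (\<Pi>\<^sub>M i\<in>{..<n}. \<Pi>\<^sub>M j\<in>{..<m i}. D i) A \<ge> 1 - \<delta> \<and>
           (\<forall>S\<in>A. \<forall>HQ \<in> space (prob_algebra (prob_algebra F)).
              \<forall>Qs. (\<forall>i<n. Qs i \<in> space (prob_algebra F)) \<longrightarrow>
                ereal (- (\<Sum>i<n. real (m i) *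
                    ln (1 - risk (l i) (D i) (Qs i)
                        + risk (l i) (D i) (Qs i) * exp (- lam i / (real n * real (m i)))))) \<le>
                ereal ((1 / real n) * (\<Sum>i<n. lam i * emp_risk (l i) (m i) (S i) (Qs i)))
                + KL (joint_post n HQ Qs F) (joint_prior n HP F)
                + ereal (ln (1 / \<delta>)))"
proof -
  interpret multitask_losses n m F Z D l
    using D_prob D_sets l_meas l_range by (simp add: multitask_losses_def)
  interpret samples: prob_space samples
    by (rule prob_space_samples)
  define c where "c i = lam i / (real n * real (m i))" for i
  define P where "P = joint_prior n HP F"
  have P: "prob_space P" "sets P = sets (prob_algebra F \<Otimes>\<^sub>M PiM {..<n} (\<lambda>_. F))"
    unfolding P_def using HP_prob by (rule prob_space_joint_prior, rule sets_joint_prior)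
  obtain A where A: "A \<in> sets samples" "1 - \<delta> \<le> measure samples A"
    and mgf: "\<And>S. S \<in> A \<Longrightarrow> (\<integral>\<^sup>+\<omega>. ennreal (exp (exponent c (snd \<omega>) S)) \<partial>P) \<le> ennreal (1 / \<delta>)"
    using samples.Markov_inequality_event[OF measurable_nn_integral_exp_exponent[OF P]
        nn_integral_nn_integral_exp_exponent_le_1[OF P] delta_pos] by blast
  have "S \<in> space samples" if "S \<in> A" for S
    using A(1) that sets.sets_into_space by blast
  then show ?thesis
    unfolding samples_def[symmetric] P_def[symmetric] using A mgf[unfolded c_def] lam_pos delta_pos
    by (intro bexI[of _ A] conjI ballI allI impI catoni_bound_of_prior_mgf[OF P, of lam _ _ _ "1 / \<delta>"])
      (auto simp: less_imp_le)
qed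

end
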